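(* Let $\mathfrak{g}$ be a Leibniz algebra and $\mathfrak{h}$ a two-sided ideal of $\mathfrak{g}$ with $\mathfrak{h} \subseteq Z_{\mathrm{Lie}}(\mathfrak{g})$. (a) $\mathfrak{g}$ is $\mathrm{Lie}$-nilpotent if and only if $\mathfrak{g}/\mathfrak{h}$ is $\mathrm{Lie}$-nilpotent. (b) If $f:\mathfrak{g}\twoheadrightarrow\mathfrak{q}$ is a $\mathrm{Lie}$-central extension of a Leibniz algebra $\mathfrak{q}$, then $\mathfrak{g}$ is $\mathrm{Lie}$-nilpotent if and only if $\mathfrak{q}$ is $\mathrm{Lie}$-nilpotent.
   Context: Fix a field $\mathbb{K}$ with $\frac12\in\mathbb{K}$. A Leibniz algebra is a $\mathbb{K}$-vector space with a bilinear bracket satisfying $[x,[y,z]]=[[x,y],z]-[[x,z],y]$. For two-sided ideals $\mathfrak{m},\mathfrak{n}$ of a Leibniz algebra $\mathfrak{g}$, the $\mathrm{Lie}$-commutator $[\mathfrak{m},\mathfrak{n}]_{\mathrm{Lie}}$ is the subspace spanned by all $[m,n]+[n,m]$, $m\in\mathfrak{m}$, $n\in\mathfrak{n}$. The $\mathrm{Lie}$-center is $Z_{\mathrm{Lie}}(\mathfrak{g})=\{z\in\mathfrak{g}: [q,z]+[z,q]=0 \text{ for all } q\in\mathfrak{g}\}$. A surjective homomorphism $f:\mathfrak{g}\to\mathfrak{q}$ is a $\mathrm{Lie}$-central extension if $\ker f\subseteq Z_{\mathrm{Lie}}(\mathfrak{g})$. The lower $\mathrm{Lie}$-central series is $\mathfrak{g}^{[1]}=\mathfrak{g}$,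 $\mathfrak{g}^{[i]}=[\mathfrak{g}^{[i-1]},\mathfrak{g}]_{\mathrm{Lie}}$; $\mathfrak{g}$ is $\mathrm{Lie}$-nilpotent if $\mathfrak{g}^{[k]}=0$ for some $k$. *)

theory Defs
  imports Main
begin

text \<open>A Leibniz algebra over a field 'k, presented on an explicit carrier set
  inside an ambient type 'v (so that quotients, whose elements are cosets,
  can be formed).  Negation is x \<mapsto> (-1)x.\<close>

record ('k, 'v) leibniz_alg =
  carrier :: "'v set"
  add :: "'v \<Rightarrow> 'v \<Rightarrow> 'v"
  zero :: "'v"
  smul :: "'k \<Rightarrow> 'v \<Rightarrow> 'v"
  brk :: "'v \<Rightarrow> 'v \<Rightarrow> 'v"

definition leibniz_algebra :: "('k::field, 'v) leibniz_alg \<Rightarrow> bool" where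
  "leibniz_algebra G \<longleftrightarrow>
     zero G \<in> carrier G \<and>
     (\<forall>x\<in>carrier G. \<forall>y\<in>carrier G. add G x y \<in> carrier G) \<and>
     (\<forall>c. \<forall>x\<in>carrier G. smul G c x \<in> carrier G) \<and>
     (\<forall>x\<in>carrier G. \<forall>y\<in>carrier G. brk G x y \<in> carrier G) \<and>
     (\<forall>x\<in>carrier G. \<forall>y\<in>carrier G. \<forall>z\<in>carrier G. add G (add G x y) z = add G x (add G y z)) \<and>
     (\<forall>x\<in>carrier G. \<forall>y\<in>carrier G. add G x y = add G y x) \<and>
     (\<forall>x\<in>carrier G. add G (zero G) x = x) \<and>
     (\<forall>x\<in>carrier G. add G x (smul G (-1) x) = zero G) \<and>
     (\<forall>x\<in>carrier G. smul G 1 x = x) \<and>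
     (\<forall>a b. \<forall>x\<in>carrier G. smul G a (smul G b x) = smul G (a * b) x) \<and>
     (\<forall>a b. \<forall>x\<in>carrier G. smul G (a + b) x = add G (smul G a x) (smul G b x)) \<and>
     (\<forall>a. \<forall>x\<in>carrier G. \<forall>y\<in>carrier G. smul G a (add G x y) = add G (smul G a x) (smul G a y)) \<and>
     (\<forall>x\<in>carrier G. \<forall>y\<in>carrier G. \<forall>z\<in>carrier G.
        brk G (add G x y) z = add G (brk G x z) (brk G y z) \<and>
        brk G x (add G y z) = add G (brk G x y) (brk G x z)) \<and>
     (\<forall>a. \<forall>x\<in>carrier G. \<forall>y\<in>carrier G.
        brk G (smul G a x) y = smul G a (brk G x y) \<and>
        brk G x (smul G a y) = smul G a (brk G x y)) \<and>
     (\<forall>x\<in>carrier G. \<forall>y\<in>carrier G. \<forall>z\<in>carrier G.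
        brk G x (brk G y z) = add G (brk G (brk G x y) z) (smul G (-1) (brk G (brk G x z) y)))"

definition subspace_of :: "('k::field, 'v) leibniz_alg \<Rightarrow> 'v set \<Rightarrow> bool" where
  "subspace_of G S \<longleftrightarrow> S \<subseteq> carrier G \<and> zero G \<in> S \<and>
     (\<forall>x\<in>S. \<forall>y\<in>S. add G x y \<in> S) \<and> (\<forall>c. \<forall>x\<in>S. smul G c x \<in> S)"

definition two_sided_ideal :: "('k::field, 'v) leibniz_alg \<Rightarrow> 'v set \<Rightarrow> bool" where
  "two_sided_ideal G H \<longleftrightarrow> subspace_of G H \<and>
     (\<forall>x\<in>carrier G. \<forall>h\<in>H. brk G x h \<in> H \<and> brk G h x \<in> H)"

definition lspan :: "('k::field, 'v) leibniz_alg \<Rightarrow> 'v set \<Rightarrow> 'v set" where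
  "lspan G A = \<Inter>{S. subspace_of G S \<and> A \<subseteq> S}"

definition lie_comm :: "('k::field, 'v) leibniz_alg \<Rightarrow> 'v set \<Rightarrow> 'v set \<Rightarrow> 'v set" where
  "lie_comm G M N = lspan G {add G (brk G m n) (brk G n m) | m n. m \<in> M \<and> n \<in> N}"

definition lie_center :: "('k::field, 'v) leibniz_alg \<Rightarrow> 'v set" where
  "lie_center G = {z \<in> carrier G. \<forall>q\<in>carrier G. add G (brk G q z) (brk G z q) = zero G}"

text \<open>lower_lie_series G i is \<open>g^[i+1]\<close>.\<close>
fun lower_lie_series :: "('k::field, 'v) leibniz_alg \<Rightarrow> nat \<Rightarrow> 'v set" where
  "lower_lie_series G 0 = carrier G"
| "lower_lie_series G (Suc i) = lie_comm G (lower_lie_series G i) (carrier G)"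

definition lie_nilpotent :: "('k::field, 'v) leibniz_alg \<Rightarrow> bool" where
  "lie_nilpotent G \<longleftrightarrow> (\<exists>k. lower_lie_series G k = {zero G})"

definition coset :: "('k::field, 'v) leibniz_alg \<Rightarrow> 'v set \<Rightarrow> 'v \<Rightarrow> 'v set" where
  "coset G H x = {add G x h | h. h \<in> H}"

definition quot :: "('k::field, 'v) leibniz_alg \<Rightarrow> 'v set \<Rightarrow> ('k, 'v set) leibniz_alg" where
  "quot G H = \<lparr> carrier = coset G H ` carrier G,
     add = (\<lambda>X Y. coset G H (add G (SOME x. x \<in> X) (SOME y. y \<in> Y))),
     zero = coset G H (zero G),
     smul = (\<lambda>c X. coset G H (smul G c (SOME x. x \<in> X))),
     brk = (\<lambda>X Y. coset G H (brk G (SOME x. x \<in> X) (SOME y. y \<in> Y))) \<rparr>"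

definition leibniz_hom :: "('k::field, 'v) leibniz_alg \<Rightarrow> ('k, 'w) leibniz_alg \<Rightarrow> ('v \<Rightarrow> 'w) \<Rightarrow> bool" where
  "leibniz_hom G Q f \<longleftrightarrow> (\<forall>x\<in>carrier G. f x \<in> carrier Q) \<and>
     (\<forall>x\<in>carrier G. \<forall>y\<in>carrier G. f (add G x y) = add Q (f x) (f y)) \<and>
     (\<forall>c. \<forall>x\<in>carrier G. f (smul G c x) = smul Q c (f x)) \<and>
     (\<forall>x\<in>carrier G. \<forall>y\<in>carrier G. f (brk G x y) = brk Q (f x) (f y))"

definition lie_central_extension :: "('k::field, 'v) leibniz_alg \<Rightarrow> ('k, 'w) leibniz_alg \<Rightarrow> ('v \<Rightarrow> 'w) \<Rightarrow> bool" where
  "lie_central_extension G Q f \<longleftrightarrow> leibniz_hom G Q f \<and> f ` carrier G = carrier Q \<and>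
     {x \<in> carrier G. f x = zero Q} \<subseteq> lie_center G"

end

theory Submission
  imports Defs
begin

text \<open>The lower Lie-central series is compatible with surjective homomorphisms
  \<open>f : g \<rightarrow> q\<close>: images of spans are spans of images, so \<open>f(g\<^sup>[\<^sup>k\<^sup>]) = q\<^sup>[\<^sup>k\<^sup>]\<close> and
  nilpotency passes from \<open>g\<close> to \<open>q\<close>.  Conversely, if \<open>q\<^sup>[\<^sup>k\<^sup>] = 0\<close> then \<open>g\<^sup>[\<^sup>k\<^sup>]\<close> lies in the
  kernel, hence in the Lie-center, and so \<open>g\<^sup>[\<^sup>k\<^sup>+\<^sup>1\<^sup>] = 0\<close>.  The quotient map onto \<open>g/h\<close>
  is such a Lie-central extension.\<close>

lemma subspace_ofI:
  "S \<subseteq> carrier G \<Longrightarrow> zero G \<in> S \<Longrightarrow> (\<And>x y. x \<in> S \<Longrightarrow> y \<in> S \<Longrightarrow> add G x y \<in> S)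
    \<Longrightarrow> (\<And>c x. x \<in> S \<Longrightarrow> smul G c x \<in> S) \<Longrightarrow> subspace_of G S"
  unfolding subspace_of_def by blast

lemma subspace_lspan:
  assumes "subspace_of G T" and "A \<subseteq> T"
  shows "subspace_of G (lspan G A)"
proof (rule subspace_ofI)
  show "lspan G A \<subseteq> carrier G"
    using assms unfolding lspan_def subspace_of_def by blast
qed (auto simp: lspan_def subspace_of_def)

lemma lspan_least: "subspace_of G S \<Longrightarrow> A \<subseteq> S \<Longrightarrow> lspan G A \<subseteq> S"
  unfolding lspan_def by blast

lemma lspan_superset: "A \<subseteq> lspan G A"
  unfolding lspan_def by blast

lemma zero_in_lspan: "zero G \<in> lspan G A"
  unfolding lspan_def subspace_of_def by blast

text \<open>Only the axioms of \<^const>\<open>leibniz_algebra\<close> that the argument uses.\<close>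

locale leibniz =
  fixes G :: "('k::field, 'v) leibniz_alg"
  assumes zero_closed: "zero G \<in> carrier G"
    and add_closed: "\<And>x y. x \<in> carrier G \<Longrightarrow> y \<in> carrier G \<Longrightarrow> add G x y \<in> carrier G"
    and smul_closed: "\<And>c x. x \<in> carrier G \<Longrightarrow> smul G c x \<in> carrier G"
    and brk_closed: "\<And>x y. x \<in> carrier G \<Longrightarrow> y \<in> carrier G \<Longrightarrow> brk G x y \<in> carrier G"
    and add_assoc: "\<And>x y z. x \<in> carrier G \<Longrightarrow> y \<in> carrier G \<Longrightarrow> z \<in> carrier G \<Longrightarrow>
      add G (add G x y) z = add G x (add G y z)"
    and add_commute: "\<And>x y. x \<in> carrier G \<Longrightarrow> y \<in> carrier G \<Longrightarrow> add G x y = add G y x"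
    and zero_add: "\<And>x. x \<in> carrier G \<Longrightarrow> add G (zero G) x = x"
    and add_neg: "\<And>x. x \<in> carrier G \<Longrightarrow> add G x (smul G (-1) x) = zero G"
    and smul_add: "\<And>a x y. x \<in> carrier G \<Longrightarrow> y \<in> carrier G \<Longrightarrow>
      smul G a (add G x y) = add G (smul G a x) (smul G a y)"
    and brk_add_left: "\<And>x y z. x \<in> carrier G \<Longrightarrow> y \<in> carrier G \<Longrightarrow> z \<in> carrier G \<Longrightarrow>
      brk G (add G x y) z = add G (brk G x z) (brk G y z)"
    and brk_add_right: "\<And>x y z. x \<in> carrier G \<Longrightarrow> y \<in> carrier G \<Longrightarrow> z \<in> carrier G \<Longrightarrow>
      brk G x (add G y z) = add G (brk G x y) (brk G x z)"

lemma leibniz_algebra_leibniz: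
  assumes "leibniz_algebra G"
  shows "leibniz G"
  using assms unfolding leibniz_algebra_def leibniz_def
  by (elim conjE) (intro conjI allI impI; simp)

context leibniz
begin

lemma add_zero: "x \<in> carrier G \<Longrightarrow> add G x (zero G) = x"
  using zero_add add_commute zero_closed by metis

lemma add_idem_eq_zero:
  assumes x: "x \<in> carrier G" and idem: "add G x x = x"
  shows "x = zero G"
proof -
  have "zero G = add G (add G x x) (smul G (-1) x)"
    using idem add_neg[OF x] by simp
  also have "\<dots> = add G x (add G x (smul G (-1) x))"
    using add_assoc x smul_closed by blast
  also have "\<dots> = x"
    using add_neg add_zero x by simp
  finally show ?thesis by simp
qed

lemma smul_zero: "smul G c (zero G) = zero G"
  using add_idem_eq_zero smul_closed zero_closed smul_add[OF zero_closed zero_closed, of c]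
    zero_add[OF zero_closed] by metis

lemma subspace_carrier: "subspace_of G (carrier G)"
  by (rule subspace_ofI) (auto intro: zero_closed add_closed smul_closed)

lemma subspace_zero: "subspace_of G {zero G}"
  by (rule subspace_ofI) (auto simp: zero_closed zero_add smul_zero)

lemma lie_comm_generators_subset_carrier:
  "M \<subseteq> carrier G \<Longrightarrow> N \<subseteq> carrier G \<Longrightarrow>
    {add G (brk G m n) (brk G n m) | m n. m \<in> M \<and> n \<in> N} \<subseteq> carrier G"
  using add_closed brk_closed by blast

lemma subspace_lie_comm:
  assumes "M \<subseteq> carrier G" and "N \<subseteq> carrier G"
  shows "subspace_of G (lie_comm G M N)"
  unfolding lie_comm_def
  by (rule subspace_lspan[OF subspace_carrier lie_comm_generators_subset_carrier[OF assms]])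

lemma lie_comm_subset_carrier:
  assumes "M \<subseteq> carrier G" and "N \<subseteq> carrier G"
  shows "lie_comm G M N \<subseteq> carrier G"
  using subspace_lie_comm[OF assms] unfolding subspace_of_def by (elim conjE)

lemma lower_lie_series_subset_carrier: "lower_lie_series G k \<subseteq> carrier G"
  by (induction k) (simp_all add: lie_comm_subset_carrier)

lemma lie_comm_lie_center:
  assumes "M \<subseteq> lie_center G"
  shows "lie_comm G M (carrier G) = {zero G}"
proof
  have "add G (brk G m n) (brk G n m) = zero G" if "m \<in> M" and n: "n \<in> carrier G" for m n
  proof -
    have "m \<in> carrier G" and "add G (brk G n m) (brk G m n) = zero G"
      using that assms unfolding lie_center_def by blast+
    then show ?thesis using add_commute brk_closed n by metis
  qed
  then show "lie_comm G M (carrier G) \<subseteq> {zero G}"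
    unfolding lie_comm_def by (intro lspan_least[OF subspace_zero]) blast
qed (simp add: lie_comm_def zero_in_lspan)

end

lemma leibniz_hom_zero:
  assumes "leibniz_algebra G" and "leibniz_algebra Q" and f: "leibniz_hom G Q f"
  shows "f (zero G) = zero Q"
proof -
  interpret G: leibniz G using assms(1) by (rule leibniz_algebra_leibniz)
  interpret Q: leibniz Q using assms(2) by (rule leibniz_algebra_leibniz)
  have "f (zero G) = add Q (f (zero G)) (f (zero G))"
    using f G.zero_add[OF G.zero_closed] G.zero_closed unfolding leibniz_hom_def by metis
  then show ?thesis
    using Q.add_idem_eq_zero f G.zero_closed unfolding leibniz_hom_def by metis
qed

text \<open>A surjective homomorphism onto a structure that need not yet be known to be a
  Leibniz algebra (as for the quotient), so preservation of zero is assumed.\<close>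

locale leibniz_epi = leibniz G for G :: "('k::field, 'v) leibniz_alg" +
  fixes Q :: "('k, 'w) leibniz_alg" and f :: "'v \<Rightarrow> 'w"
  assumes hom: "leibniz_hom G Q f"
    and surj: "f ` carrier G = carrier Q"
    and hom_zero: "f (zero G) = zero Q"
begin

lemma hom_add: "x \<in> carrier G \<Longrightarrow> y \<in> carrier G \<Longrightarrow> f (add G x y) = add Q (f x) (f y)"
  using hom unfolding leibniz_hom_def by blast

lemma hom_smul: "x \<in> carrier G \<Longrightarrow> f (smul G c x) = smul Q c (f x)"
  using hom unfolding leibniz_hom_def by blast

lemma hom_brk: "x \<in> carrier G \<Longrightarrow> y \<in> carrier G \<Longrightarrow> f (brk G x y) = brk Q (f x) (f y)"
  using hom unfolding leibniz_hom_def by blast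

lemma subspace_image:
  assumes S: "subspace_of G S"
  shows "subspace_of Q (f ` S)"
proof (rule subspace_ofI)
  have SG: "S \<subseteq> carrier G" using S unfolding subspace_of_def by blast
  show "f ` S \<subseteq> carrier Q" using SG surj by blast
  show "zero Q \<in> f ` S" using S hom_zero unfolding subspace_of_def by force
  show "add Q x y \<in> f ` S" if xy: "x \<in> f ` S" "y \<in> f ` S" for x y
  proof -
    obtain a b where ab: "a \<in> S" "b \<in> S" and "x = f a" "y = f b" using xy by blast
    then have "add Q x y = f (add G a b)" using SG by (simp add: hom_add subset_iff)
    moreover have "add G a b \<in> S" using S ab by (simp add: subspace_of_def)
    ultimately show ?thesis by blast
  qed
  show "smul Q c x \<in> f ` S" if x: "x \<in> f ` S" for c x
  proof -
    obtain a where a: "a \<in> S" and "x = f a" using x by blast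
    then have "smul Q c x = f (smul G c a)" using SG by (simp add: hom_smul subset_iff)
    moreover have "smul G c a \<in> S" using S a by (simp add: subspace_of_def)
    ultimately show ?thesis by blast
  qed
qed

lemma subspace_preimage:
  assumes S: "subspace_of Q S"
  shows "subspace_of G {x \<in> carrier G. f x \<in> S}"
proof (rule subspace_ofI)
  show "zero G \<in> {x \<in> carrier G. f x \<in> S}"
    using zero_closed hom_zero S unfolding subspace_of_def by simp
  show "add G x y \<in> {x \<in> carrier G. f x \<in> S}"
    if "x \<in> {x \<in> carrier G. f x \<in> S}" "y \<in> {x \<in> carrier G. f x \<in> S}" for x y
    using that S add_closed hom_add unfolding subspace_of_def by auto
  show "smul G c x \<in> {x \<in> carrier G. f x \<in> S}" if "x \<in> {x \<in> carrier G. f x \<in> S}" for c x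
    using that S smul_closed hom_smul unfolding subspace_of_def by auto
qed blast

lemma image_lspan:
  assumes A: "A \<subseteq> carrier G"
  shows "f ` lspan G A = lspan Q (f ` A)"
proof
  have "subspace_of Q (f ` lspan G A)"
    by (rule subspace_image[OF subspace_lspan[OF subspace_carrier A]])
  moreover have "f ` A \<subseteq> f ` lspan G A"
    by (intro image_mono lspan_superset)
  ultimately show "lspan Q (f ` A) \<subseteq> f ` lspan G A"
    by (rule lspan_least)
next
  have "subspace_of Q (carrier Q)"
    using subspace_image[OF subspace_carrier] surj by simp
  moreover have "f ` A \<subseteq> carrier Q"
    using A surj by blast
  ultimately have "subspace_of Q (lspan Q (f ` A))"
    by (rule subspace_lspan)
  moreover have "A \<subseteq> {x \<in> carrier G. f x \<in> lspan Q (f ` A)}"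
    using A lspan_superset[of "f ` A" Q] by blast
  ultimately have "lspan G A \<subseteq> {x \<in> carrier G. f x \<in> lspan Q (f ` A)}"
    by (intro lspan_least subspace_preimage)
  then show "f ` lspan G A \<subseteq> lspan Q (f ` A)" by blast
qed

lemma image_lie_comm:
  assumes M: "M \<subseteq> carrier G" and N: "N \<subseteq> carrier G"
  shows "f ` lie_comm G M N = lie_comm Q (f ` M) (f ` N)"
proof -
  have gen: "f (add G (brk G m n) (brk G n m)) = add Q (brk Q (f m) (f n)) (brk Q (f n) (f m))"
    if "m \<in> M" "n \<in> N" for m n
    using that M N hom_add hom_brk brk_closed by (simp add: subsetD)
  let ?gens = "{add G (brk G m n) (brk G n m) | m n. m \<in> M \<and> n \<in> N}"
  have "add Q (brk Q (f m) (f n)) (brk Q (f n) (f m)) \<in> f ` ?gens" if "m \<in> M" "n \<in> N" for m n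
    using gen[OF that, symmetric] that by blast
  then have "f ` ?gens = {add Q (brk Q m n) (brk Q n m) | m n. m \<in> f ` M \<and> n \<in> f ` N}"
    by (auto simp: gen) blast
  then show ?thesis
    unfolding lie_comm_def using image_lspan[OF lie_comm_generators_subset_carrier[OF M N]] by simp
qed

lemma image_lower_lie_series: "f ` lower_lie_series G k = lower_lie_series Q k"
  by (induction k)
    (simp_all add: surj image_lie_comm lower_lie_series_subset_carrier)

theorem lie_nilpotent_iff:
  assumes central_kernel: "{x \<in> carrier G. f x = zero Q} \<subseteq> lie_center G"
  shows "lie_nilpotent G \<longleftrightarrow> lie_nilpotent Q"
proof
  assume "lie_nilpotent G"
  then obtain k where "lower_lie_series G k = {zero G}"
    unfolding lie_nilpotent_def by blast
  then have "lower_lie_series Q k = {zero Q}"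
    using image_lower_lie_series[of k] hom_zero by simp
  then show "lie_nilpotent Q" unfolding lie_nilpotent_def by blast
next
  assume "lie_nilpotent Q"
  then obtain k where "lower_lie_series Q k = {zero Q}"
    unfolding lie_nilpotent_def by blast
  then have "f ` lower_lie_series G k \<subseteq> {zero Q}"
    using image_lower_lie_series by simp
  then have "lower_lie_series G k \<subseteq> lie_center G"
    using central_kernel lower_lie_series_subset_carrier by blast
  then have "lower_lie_series G (Suc k) = {zero G}"
    using lie_comm_lie_center by simp
  then show "lie_nilpotent G" unfolding lie_nilpotent_def by blast
qed

end

locale leibniz_ideal = leibniz G for G :: "('k::field, 'v) leibniz_alg" +
  fixes H :: "'v set"
  assumes ideal: "two_sided_ideal G H"
begin

lemma ideal_subset_carrier: "H \<subseteq> carrier G"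
  using ideal unfolding two_sided_ideal_def subspace_of_def by blast

lemma ideal_zero: "zero G \<in> H"
  using ideal unfolding two_sided_ideal_def subspace_of_def by blast

lemma ideal_add: "x \<in> H \<Longrightarrow> y \<in> H \<Longrightarrow> add G x y \<in> H"
  using ideal unfolding two_sided_ideal_def subspace_of_def by blast

lemma ideal_smul: "x \<in> H \<Longrightarrow> smul G c x \<in> H"
  using ideal unfolding two_sided_ideal_def subspace_of_def by blast

lemma ideal_brk_left: "x \<in> carrier G \<Longrightarrow> h \<in> H \<Longrightarrow> brk G x h \<in> H"
  using ideal unfolding two_sided_ideal_def by blast

lemma ideal_brk_right: "x \<in> carrier G \<Longrightarrow> h \<in> H \<Longrightarrow> brk G h x \<in> H"
  using ideal unfolding two_sided_ideal_def by blast

lemma in_coset_self: "x \<in> carrier G \<Longrightarrow> x \<in> coset G H x"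
  unfolding coset_def using ideal_zero add_zero by force

lemma coset_add_ideal:
  assumes x: "x \<in> carrier G" and h: "h \<in> H"
  shows "coset G H (add G x h) = coset G H x"
proof
  have hG: "h \<in> carrier G" using h ideal_subset_carrier by blast
  show "coset G H (add G x h) \<subseteq> coset G H x"
  proof
    fix y assume "y \<in> coset G H (add G x h)"
    then obtain h' where h': "h' \<in> H" "y = add G (add G x h) h'"
      unfolding coset_def by blast
    then have "y = add G x (add G h h')"
      using add_assoc x hG ideal_subset_carrier by blast
    then show "y \<in> coset G H x"
      using ideal_add[OF h h'(1)] unfolding coset_def by blast
  qed
  show "coset G H x \<subseteq> coset G H (add G x h)"
  proof
    fix y assume "y \<in> coset G H x"
    then obtain h' where h': "h' \<in> H" "y = add G x h'"
      unfolding coset_def by blast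
    let ?n = "smul G (-1) h"
    have nH: "?n \<in> H" using ideal_smul h by blast
    have h'G: "h' \<in> carrier G" and nG: "?n \<in> carrier G"
      using h'(1) nH ideal_subset_carrier by blast+
    have "add G (add G x h) (add G ?n h') = add G x (add G (add G h ?n) h')"
      using add_assoc add_closed x hG nG h'G by metis
    also have "\<dots> = y"
      using add_neg[OF hG] zero_add[OF h'G] h'(2) by simp
    finally show "y \<in> coset G H (add G x h)"
      using ideal_add[OF nH h'(1)] unfolding coset_def by blast
  qed
qed

text \<open>The operations of \<^const>\<open>quot\<close> act on arbitrarily chosen representatives; each
  of them differs from a given one by an element of the ideal.\<close>

lemma some_in_coset:
  assumes "x \<in> carrier G"
  obtains h where "h \<in> H" "(SOME a. a \<in> coset G H x) = add G x h"
proof -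
  have "(SOME a. a \<in> coset G H x) \<in> coset G H x"
    using in_coset_self[OF assms] by (rule someI)
  then show thesis using that unfolding coset_def by blast
qed

lemma quot_smul:
  assumes x: "x \<in> carrier G"
  shows "smul (quot G H) c (coset G H x) = coset G H (smul G c x)"
proof -
  obtain h where h: "h \<in> H" "(SOME a. a \<in> coset G H x) = add G x h"
    using some_in_coset[OF x] .
  have "smul G c (add G x h) = add G (smul G c x) (smul G c h)"
    using smul_add x h(1) ideal_subset_carrier by blast
  then show ?thesis
    using coset_add_ideal[OF smul_closed[OF x] ideal_smul[OF h(1)]] by (simp add: quot_def h(2))
qed

lemma quot_add:
  assumes x: "x \<in> carrier G" and y: "y \<in> carrier G"
  shows "add (quot G H) (coset G H x) (coset G H y) = coset G H (add G x y)"
proof -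
  obtain h1 h2 where h1: "h1 \<in> H" "(SOME a. a \<in> coset G H x) = add G x h1"
    and h2: "h2 \<in> H" "(SOME a. a \<in> coset G H y) = add G y h2"
    using some_in_coset x y by metis
  have h1G: "h1 \<in> carrier G" and h2G: "h2 \<in> carrier G"
    using h1 h2 ideal_subset_carrier by blast+
  have "add G (add G x h1) (add G y h2) = add G (add G (add G x y) h1) h2"
    using add_assoc add_commute add_closed x y h1G h2G by metis
  then show ?thesis
    using coset_add_ideal add_closed x y h1 h2 h1G by (simp add: quot_def)
qed

lemma quot_brk:
  assumes x: "x \<in> carrier G" and y: "y \<in> carrier G"
  shows "brk (quot G H) (coset G H x) (coset G H y) = coset G H (brk G x y)"
proof -
  obtain h1 h2 where h1: "h1 \<in> H" "(SOME a. a \<in> coset G H x) = add G x h1"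
    and h2: "h2 \<in> H" "(SOME a. a \<in> coset G H y) = add G y h2"
    using some_in_coset x y by metis
  have h1G: "h1 \<in> carrier G" and h2G: "h2 \<in> carrier G"
    using h1 h2 ideal_subset_carrier by blast+
  have y': "add G y h2 \<in> carrier G" using add_closed y h2G by blast
  have "brk G (add G x h1) (add G y h2)
      = add G (add G (brk G x y) (brk G x h2)) (brk G h1 (add G y h2))"
    using brk_add_left[OF x h1G y'] brk_add_right[OF x y h2G] by simp
  then show ?thesis
    using coset_add_ideal add_closed brk_closed x y y' h1G h2G
      ideal_brk_left[OF x h2(1)] ideal_brk_right[OF y' h1(1)]
    by (simp add: quot_def h1 h2)
qed

lemma quot_epi: "leibniz_epi G (quot G H) (coset G H)"
  by unfold_locales
    (auto simp: leibniz_hom_def quot_smul quot_add quot_brk, auto simp: quot_def)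

lemma quot_kernel: "{x \<in> carrier G. coset G H x = zero (quot G H)} \<subseteq> H"
proof
  fix x assume "x \<in> {x \<in> carrier G. coset G H x = zero (quot G H)}"
  then have "x \<in> coset G H (zero G)"
    using in_coset_self by (auto simp: quot_def)
  then show "x \<in> H"
    using zero_add ideal_subset_carrier unfolding coset_def by auto
qed

theorem lie_nilpotent_quot_iff:
  "H \<subseteq> lie_center G \<Longrightarrow> lie_nilpotent G \<longleftrightarrow> lie_nilpotent (quot G H)"
  using leibniz_epi.lie_nilpotent_iff[OF quot_epi] quot_kernel by blast

end

theorem mainTheorem1:
  fixes G :: "('k::field, 'v) leibniz_alg" and H :: "'v set"
  assumes "(2::'k) \<noteq> 0"
    and "leibniz_algebra G"
    and "two_sided_ideal G H"
    and "H \<subseteq> lie_center G"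
  shows "(lie_nilpotent G \<longleftrightarrow> lie_nilpotent (quot G H))
    \<and> (\<forall>(Q::('k, 'w) leibniz_alg) f. leibniz_algebra Q \<and> lie_central_extension G Q f
          \<longrightarrow> (lie_nilpotent G \<longleftrightarrow> lie_nilpotent Q))"
proof (intro conjI allI impI)
  interpret leibniz_ideal G H
    using leibniz_algebra_leibniz[OF assms(2)] assms(3)
    by (simp add: leibniz_ideal_def leibniz_ideal_axioms_def)
  show "lie_nilpotent G \<longleftrightarrow> lie_nilpotent (quot G H)"
    using lie_nilpotent_quot_iff assms(4) .
next
  fix Q :: "('k, 'w) leibniz_alg" and f
  assume "leibniz_algebra Q \<and> lie_central_extension G Q f"
  then have "leibniz_epi G Q f" and "{x \<in> carrier G. f x = zero Q} \<subseteq> lie_center G"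
    using leibniz_algebra_leibniz[OF assms(2)] leibniz_hom_zero[OF assms(2)]
    unfolding lie_central_extension_def leibniz_epi_def leibniz_epi_axioms_def by blast+
  then show "lie_nilpotent G \<longleftrightarrow> lie_nilpotent Q"
    by (rule leibniz_epi.lie_nilpotent_iff)
qed

end
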